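(* Let $F$, $G$, $\Pi$ be as in the context. For $(\xi,z)\in\Sigma_N\times I$ and $(\omega,x)\in\Sigma_A\times I$ let $\nu_n(\xi,z)=\frac1n\sum_{i=0}^{n-1}\delta_{F^i(\xi,z)}$ and $\mu_n(\omega,x)=\frac1n\sum_{i=0}^{n-1}\delta_{G^i(\omega,x)}$. If $\nu_n(\Pi(\omega,x))\to\nu$ in the weak$*$ topology as $n\to\infty$ and $\mu$ is a weak$*$ limit point of the sequence $(\mu_n(\omega,x))_n$, then $\nu=\Pi_*\mu$.
   Context: $I=[0,1]$, $R(x)=1-x$. $F(\xi,p)=(\sigma(\xi),f_{\xi_0}(p))$ on $\Sigma_N\times I$, $\Sigma_N=\{1,\ldots,N\}^{\mathbb Z}$, with $f_i$ $C^1$-diffeomorphisms onto their images. $\mathcal I_P$ / $\mathcal I_R$: indices of orientation preserving / reversing $f_i$. $A=(a_{ij})_{i,j=1}^{2N}$ with $a_{ij}=1$ if ($i\in\mathcal I_P$, $j\le N$), or ($i\in\mathcal I_R$, $j>N$), or ($i-N\in\mathcal I_P$, $j>N$), or ($i-N\in\mathcal I_R$, $j\le N$), else $0$; $\Sigma_A$ the $A$-admissible sequences in $\{1,\ldots,2N\}^{\mathbb Z}$ with shift $\sigma_A$; $\pi(\omega)_n=\overline{\omega_n}$ ($\overline i=i$ for $i\le N$, $\overline i=i-N$ otherwise). $G(\omega,x)=(\sigma_A(\omega),g_{\omega_0}(x))$ with $g_i=f_i$, $g_{i+N}=R\circ f_i\circ R$ ($i\in\mathcal I_P$), $g_i=R\circ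 f_i$, $g_{i+N}=f_i\circ R$ ($i\in\mathcal I_R$). $C=\{\omega\colon\omega_0\le N\}$; $\Pi(\omega,x)=(\pi(\omega),x)$ if $\omega\in C$, $(\pi(\omega),R(x))$ otherwise. *)

theory Defs
  imports "HOL-Analysis.Analysis"
begin

type_synonym seq = "int \<Rightarrow> nat"

definition II :: "real set" where "II = {0..1}"

definition Rf :: "real \<Rightarrow> real" where "Rf x = 1 - x"

text \<open>C^1 diffeomorphism of I onto its image (contained in I): continuously
  differentiable on I with nowhere vanishing derivative (hence strictly monotone
  with C^1 inverse on the image).\<close>
definition C1_diffeo_into :: "(real \<Rightarrow> real) \<Rightarrow> bool" where
  "C1_diffeo_into h \<longleftrightarrow> h ` II \<subseteq> II \<and>
     (\<exists>h'. continuous_on II h' \<and>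
        (\<forall>x\<in>II. (h has_real_derivative h' x) (at x within II) \<and> h' x \<noteq> 0))"

definition SigmaN :: "nat \<Rightarrow> seq set" where
  "SigmaN N = {\<xi>. \<forall>n. \<xi> n \<in> {1..N}}"

definition shift :: "seq \<Rightarrow> seq" where "shift \<xi> = (\<lambda>n. \<xi> (n + 1))"

definition FF :: "(nat \<Rightarrow> real \<Rightarrow> real) \<Rightarrow> seq \<times> real \<Rightarrow> seq \<times> real" where
  "FF f z = (shift (fst z), f (fst z 0) (snd z))"

definition IP :: "nat \<Rightarrow> (nat \<Rightarrow> real \<Rightarrow> real) \<Rightarrow> nat set" where
  "IP N f = {i \<in> {1..N}. \<forall>x\<in>II. \<forall>y\<in>II. x < y \<longrightarrow> f i x < f i y}"

definition IR :: "nat \<Rightarrow> (nat \<Rightarrow> real \<Rightarrow> real) \<Rightarrow> nat set" where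
  "IR N f = {i \<in> {1..N}. \<forall>x\<in>II. \<forall>y\<in>II. x < y \<longrightarrow> f i x > f i y}"

definition adm :: "nat \<Rightarrow> (nat \<Rightarrow> real \<Rightarrow> real) \<Rightarrow> nat \<Rightarrow> nat \<Rightarrow> bool" where
  "adm N f i j \<longleftrightarrow>
     (i \<in> IP N f \<and> j \<le> N) \<or> (i \<in> IR N f \<and> j > N) \<or>
     (i > N \<and> i - N \<in> IP N f \<and> j > N) \<or> (i > N \<and> i - N \<in> IR N f \<and> j \<le> N)"

definition SigmaA :: "nat \<Rightarrow> (nat \<Rightarrow> real \<Rightarrow> real) \<Rightarrow> seq set" where
  "SigmaA N f = {\<omega>. \<forall>n. \<omega> n \<in> {1..2*N} \<and> adm N f (\<omega> n) (\<omega> (n + 1))}"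

definition bar :: "nat \<Rightarrow> nat \<Rightarrow> nat" where
  "bar N i = (if i \<le> N then i else i - N)"

definition piA :: "nat \<Rightarrow> seq \<Rightarrow> seq" where
  "piA N \<omega> = (\<lambda>n. bar N (\<omega> n))"

definition gg :: "nat \<Rightarrow> (nat \<Rightarrow> real \<Rightarrow> real) \<Rightarrow> nat \<Rightarrow> real \<Rightarrow> real" where
  "gg N f i = (if i \<le> N then (if i \<in> IP N f then f i else Rf \<circ> f i)
               else (if i - N \<in> IP N f then Rf \<circ> f (i - N) \<circ> Rf else f (i - N) \<circ> Rf))"

definition GG :: "nat \<Rightarrow> (nat \<Rightarrow> real \<Rightarrow> real) \<Rightarrow> seq \<times> real \<Rightarrow> seq \<times> real" where
  "GG N f z = (shift (fst z), gg N f (fst z 0) (snd z))"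

definition PiM :: "nat \<Rightarrow> seq \<times> real \<Rightarrow> seq \<times> real" where
  "PiM N z = (if fst z 0 \<le> N then (piA N (fst z), snd z) else (piA N (fst z), Rf (snd z)))"

text \<open>Empirical measure (1/n) sum_{i<n} delta_{T^i z}, as a Borel measure.\<close>
definition emp :: "('a::topological_space \<Rightarrow> 'a) \<Rightarrow> 'a \<Rightarrow> nat \<Rightarrow> 'a measure" where
  "emp T z n = distr (uniform_measure (count_space UNIV) {..<n}) borel (\<lambda>i. (T ^^ i) z)"

text \<open>Finite Borel measure on the ambient space, concentrated on the compact set K
  (i.e. an element of M(K)).\<close>
definition meas_on :: "'a::topological_space set \<Rightarrow> 'a measure \<Rightarrow> bool" where
  "meas_on K M \<longleftrightarrow> sets M = sets borel \<and> finite_measure M \<and> emeasure M (UNIV - K) = 0"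

definition weak_conv :: "(nat \<Rightarrow> 'a::topological_space measure) \<Rightarrow> 'a measure \<Rightarrow> bool" where
  "weak_conv Ms M \<longleftrightarrow> (\<forall>\<phi> :: 'a \<Rightarrow> real. continuous_on UNIV \<phi> \<and> bounded (range \<phi>) \<longrightarrow>
      (\<lambda>n. \<integral>x. \<phi> x \<partial>Ms n) \<longlonglongrightarrow> (\<integral>x. \<phi> x \<partial>M))"

end

theory Submission
  imports Defs
begin

text \<open>
  The coding map \<Pi> semiconjugates G to F on \<Sigma>_A \<times> I: the second half of
  the alphabet records whether the fibre coordinate is currently reflected, so
  \<Pi> \<circ> G = F \<circ> \<Pi>. Hence the F-empirical measures along the orbit of \<Pi>(\<omega>, x)
  are the \<Pi>-images of the G-empirical measures along the orbit of (\<omega>, x). As \<Pi>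
  is continuous, pushing forward a subsequence converging to \<mu> yields a
  subsequence of the F-empirical measures converging to \<Pi>_* \<mu>, and weak* limits
  of finite Borel measures are unique.
\<close>

lemma tendsto_integral_infdist_cutoff:
  fixes M :: "'a::metric_space measure"
  assumes "finite_measure M" "sets M = sets borel" "closed C" "C \<noteq> {}"
  shows "(\<lambda>k. \<integral>x. max 0 (1 - real k * infdist x C) \<partial>M) \<longlonglongrightarrow> measure M C"
proof -
  interpret finite_measure M by fact
  have C_sets: "C \<in> sets M" using assms by simp
  have "(\<lambda>k. max 0 (1 - real k * infdist x C)) \<longlonglongrightarrow> indicator C x" for x
  proof (cases "x \<in> C")
    case False
    then have "infdist x C > 0"
      using assms in_closed_iff_infdist_zero infdist_nonneg by (metis less_eq_real_def)
    then have "eventually (\<lambda>k. 1 < infdist x C * real k) sequentially"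
      using filterlim_tendsto_pos_mult_at_top[OF tendsto_const _ filterlim_real_sequentially]
      by (simp add: filterlim_at_top_dense)
    then have "eventually (\<lambda>k. max 0 (1 - real k * infdist x C) = 0) sequentially"
      by (rule eventually_mono) (simp add: mult.commute)
    with False show ?thesis by (simp add: tendsto_eventually)
  qed simp
  moreover have "(\<lambda>x. max 0 (1 - real k * infdist x C)) \<in> borel_measurable M" for k
    unfolding measurable_cong_sets[OF assms(2) refl]
    by (intro borel_measurable_continuous_onI continuous_intros)
  ultimately have "(\<lambda>k. \<integral>x. max 0 (1 - real k * infdist x C) \<partial>M) \<longlonglongrightarrow> (\<integral>x. indicator C x \<partial>M)"
    using C_sets
    by (intro integral_dominated_convergence[where w="\<lambda>_. 1"]) (auto simp: infdist_nonneg)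
  then show ?thesis using C_sets by simp
qed

lemma finite_borel_measure_eqI:
  fixes M1 M2 :: "'a::metric_space measure"
  assumes "finite_measure M1" "finite_measure M2" "sets M1 = sets borel" "sets M2 = sets borel"
    and integral_eq: "\<And>\<phi> :: 'a \<Rightarrow> real. continuous_on UNIV \<phi> \<Longrightarrow> bounded (range \<phi>) \<Longrightarrow>
      (\<integral>x. \<phi> x \<partial>M1) = (\<integral>x. \<phi> x \<partial>M2)"
  shows "M1 = M2"
proof (rule measure_eqI_generator_eq[where E="Collect closed" and \<Omega>=UNIV and A="\<lambda>_. UNIV"])
  show "sets M1 = sigma_sets UNIV (Collect closed)" "sets M2 = sigma_sets UNIV (Collect closed)"
    using assms(3,4) by (simp_all add: borel_eq_closed)
  show "emeasure M1 UNIV \<noteq> \<infinity>"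
    using finite_measure.emeasure_finite[OF assms(1)] by simp
  fix C :: "'a set"
  assume "C \<in> Collect closed"
  then have "closed C" by simp
  show "emeasure M1 C = emeasure M2 C"
  proof (cases "C = {}")
    case False
    have "(\<integral>x. max 0 (1 - real k * infdist x C) \<partial>M1) = (\<integral>x. max 0 (1 - real k * infdist x C) \<partial>M2)"
      for k
      by (rule integral_eq, intro continuous_intros)
         (auto simp: bounded_iff infdist_nonneg intro: exI[of _ 1])
    then have "measure M1 C = measure M2 C"
      using tendsto_integral_infdist_cutoff[OF assms(1,3) \<open>closed C\<close> False]
        tendsto_integral_infdist_cutoff[OF assms(2,4) \<open>closed C\<close> False]
      by (simp add: LIMSEQ_unique)
    then show ?thesis
      by (simp add: finite_measure.emeasure_eq_measure[OF assms(1)]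
                    finite_measure.emeasure_eq_measure[OF assms(2)])
  qed simp
qed (auto simp: Int_stable_def)

lemma finite_borel_measure_eqI_embedding:
  fixes M1 M2 :: "'a::topological_space measure" and e :: "'a \<Rightarrow> 'b::metric_space"
  assumes "continuous_on UNIV e" "d \<in> borel_measurable borel" "\<And>z. d (e z) = z"
    and "finite_measure M1" "finite_measure M2" "sets M1 = sets borel" "sets M2 = sets borel"
    and integral_eq: "\<And>\<phi> :: 'a \<Rightarrow> real. continuous_on UNIV \<phi> \<Longrightarrow> bounded (range \<phi>) \<Longrightarrow>
      (\<integral>x. \<phi> x \<partial>M1) = (\<integral>x. \<phi> x \<partial>M2)"
  shows "M1 = M2"
proof -
  have e_meas: "e \<in> measurable M borel" if "sets M = sets borel" for M :: "'a measure"
    using borel_measurable_continuous_onI[OF assms(1)] by (simp add: measurable_cong_sets[OF that refl])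
  have recover: "distr (distr M borel e) borel d = M" if "sets M = sets borel" for M :: "'a measure"
    using distr_distr[OF assms(2) e_meas[OF that]] distr_id2[OF that[symmetric]]
    by (simp add: comp_def assms(3))
  have "distr M1 borel e = distr M2 borel e"
  proof (rule finite_borel_measure_eqI)
    show "finite_measure (distr M1 borel e)" "finite_measure (distr M2 borel e)"
      using finite_measure.finite_measure_distr e_meas assms(4-7) by blast+
    fix \<psi> :: "'b \<Rightarrow> real"
    assume "continuous_on UNIV \<psi>" "bounded (range \<psi>)"
    moreover from this have "continuous_on UNIV (\<psi> \<circ> e)" "bounded (range (\<psi> \<circ> e))"
      by (auto intro: continuous_on_compose2[OF _ assms(1)] bounded_subset)
    ultimately show "(\<integral>x. \<psi> x \<partial>distr M1 borel e) = (\<integral>x. \<psi> x \<partial>distr M2 borel e)"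
      using integral_eq[of "\<psi> \<circ> e"] e_meas assms(6,7)
      by (simp add: integral_distr borel_measurable_continuous_onI)
  qed simp_all
  then show ?thesis
    using recover assms(6,7) by metis
qed

lemma continuous_on_coordinate_map:
  fixes g :: "nat \<Rightarrow> 'c::topological_space"
  shows "continuous_on UNIV (\<lambda>z :: ('i \<Rightarrow> nat) \<times> 'b::topological_space. g (fst z i))"
  by (intro continuous_on_compose2[OF Topological_Spaces.continuous_on_discrete[of UNIV g]
        continuous_on_compose2[OF continuous_on_product_coordinates continuous_on_fst]]) simp_all

text \<open>
  \<open>nat\<close> is not an instance of \<open>metric_space\<close>, so uniqueness of weak* limits on
  sequence space is transferred from the metric space of real sequences along this
  continuous embedding, which has the measurable left inverse \<open>nat_coords\<close>.
\<close>

definition real_coords :: "('i \<Rightarrow> nat) \<times> 'b \<Rightarrow> ('i \<Rightarrow> real) \<times> 'b" where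
  "real_coords z = ((\<lambda>i. real (fst z i)), snd z)"

definition nat_coords :: "('i \<Rightarrow> real) \<times> 'b \<Rightarrow> ('i \<Rightarrow> nat) \<times> 'b" where
  "nat_coords u = ((\<lambda>i. nat \<lfloor>fst u i\<rfloor>), snd u)"

lemma nat_coords_real_coords [simp]: "nat_coords (real_coords z) = z"
  by (simp add: nat_coords_def real_coords_def)

lemma continuous_on_real_coords:
  "continuous_on UNIV (real_coords :: ('i \<Rightarrow> nat) \<times> 'b::topological_space \<Rightarrow> _)"
  unfolding real_coords_def
  by (intro continuous_on_Pair continuous_on_coordinatewise_then_product
        continuous_on_coordinate_map continuous_on_snd continuous_on_id)

lemma borel_measurable_nat_coords:
  "(nat_coords :: ('i::countable \<Rightarrow> real) \<times> 'b::second_countable_topology \<Rightarrow> _) \<in> borel_measurable borel"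
proof -
  have "(\<lambda>u :: ('i \<Rightarrow> real) \<times> 'b. nat \<lfloor>fst u i\<rfloor>) \<in> borel_measurable borel" for i
  proof -
    have "(\<lambda>u :: ('i \<Rightarrow> real) \<times> 'b. fst u i) \<in> borel_measurable borel"
      by (intro borel_measurable_continuous_onI
          continuous_on_compose2[OF continuous_on_product_coordinates continuous_on_fst]) auto
    then show ?thesis
      by (simp add: measurable_cong_sets[OF refl sets_borel_eq_count_space])
  qed
  then have coords: "(\<lambda>u :: ('i \<Rightarrow> real) \<times> 'b. \<lambda>i. nat \<lfloor>fst u i\<rfloor>) \<in> borel_measurable borel"
    by (rule measurable_coordinatewise_then_product)
  have "(nat_coords :: ('i \<Rightarrow> real) \<times> 'b \<Rightarrow> _) \<in> borel \<rightarrow>\<^sub>M borel \<Otimes>\<^sub>M borel"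
    unfolding nat_coords_def
    by (intro measurable_Pair coords borel_measurable_continuous_onI continuous_on_snd continuous_on_id)
  then show ?thesis
    by (simp add: borel_prod)
qed

lemma weak_conv_unique:
  fixes M1 M2 :: "(('i::countable \<Rightarrow> nat) \<times> 'b::{metric_space, second_countable_topology}) measure"
  assumes "weak_conv Ms M1" "weak_conv Ms M2"
    and "finite_measure M1" "finite_measure M2" "sets M1 = sets borel" "sets M2 = sets borel"
  shows "M1 = M2"
  using assms(3-)
  by (rule finite_borel_measure_eqI_embedding
        [OF continuous_on_real_coords borel_measurable_nat_coords nat_coords_real_coords])
     (use assms(1,2) in \<open>auto simp: weak_conv_def intro: LIMSEQ_unique\<close>)

lemma weak_conv_subseq:
  assumes "weak_conv Ms M" "strict_mono r"
  shows "weak_conv (\<lambda>k. Ms (r k)) M"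
  using assms LIMSEQ_subseq_LIMSEQ by (fastforce simp: weak_conv_def comp_def)

lemma weak_conv_distr:
  fixes T :: "'a::topological_space \<Rightarrow> 'b::topological_space"
  assumes "weak_conv Ms M" "continuous_on UNIV T"
    and "\<And>n. sets (Ms n) = sets borel" "sets M = sets borel"
  shows "weak_conv (\<lambda>n. distr (Ms n) borel T) (distr M borel T)"
  unfolding weak_conv_def
proof (intro allI impI, elim conjE)
  fix \<phi> :: "'b \<Rightarrow> real"
  assume "continuous_on UNIV \<phi>" "bounded (range \<phi>)"
  then have "continuous_on UNIV (\<phi> \<circ> T)" "bounded (range (\<phi> \<circ> T))"
    by (auto intro: continuous_on_compose2[OF _ assms(2)] bounded_subset)
  then have "(\<lambda>n. \<integral>x. \<phi> (T x) \<partial>Ms n) \<longlonglongrightarrow> (\<integral>x. \<phi> (T x) \<partial>M)"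
    using assms(1) by (simp add: weak_conv_def comp_def)
  moreover have "(\<integral>x. \<phi> x \<partial>distr M' borel T) = (\<integral>x. \<phi> (T x) \<partial>M')" if "sets M' = sets borel" for M'
    using borel_measurable_continuous_onI[OF assms(2)]
      borel_measurable_continuous_onI[OF \<open>continuous_on UNIV \<phi>\<close>]
    by (simp add: integral_distr measurable_cong_sets[OF that refl])
  ultimately show "(\<lambda>n. \<integral>x. \<phi> x \<partial>distr (Ms n) borel T) \<longlonglongrightarrow> (\<integral>x. \<phi> x \<partial>distr M borel T)"
    using assms(3,4) by simp
qed

lemma emp_semiconj:
  assumes "h \<in> borel_measurable borel"
    and "\<And>z. z \<in> A \<Longrightarrow> T z \<in> A" "\<And>z. z \<in> A \<Longrightarrow> h (T z) = S (h z)" "z \<in> A"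
  shows "emp S (h z) n = distr (emp T z n) borel h"
proof -
  have "(T ^^ i) z \<in> A \<and> (S ^^ i) (h z) = h ((T ^^ i) z)" for i
    by (induction i) (simp_all add: assms(2-4))
  then show ?thesis
    unfolding emp_def using assms(1)
    by (subst distr_distr) (auto intro: distr_cong simp: comp_def)
qed

lemma IP_IR_disjoint: "i \<in> IP N f \<Longrightarrow> i \<notin> IR N f"
proof
  assume "i \<in> IP N f" "i \<in> IR N f"
  then have "f i 0 < f i 1" "f i 1 < f i 0"
    unfolding IP_def IR_def II_def by auto
  then show False by simp
qed

lemma shift_in_SigmaA: "\<omega> \<in> SigmaA N f \<Longrightarrow> shift \<omega> \<in> SigmaA N f"
  unfolding SigmaA_def shift_def by (auto simp: add.assoc dest: spec[of _ "_ + 1"])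

lemma PiM_GG:
  assumes "fst z \<in> SigmaA N f"
  shows "PiM N (GG N f z) = FF f (PiM N z)"
proof -
  obtain \<omega> y where z: "z = (\<omega>, y)" by fastforce
  have "adm N f (\<omega> 0) (\<omega> 1)"
    using assms unfolding z SigmaA_def by (auto dest: spec[of _ "0::int"])
  moreover have "i \<in> IP N f \<Longrightarrow> i \<le> N" "i \<in> IR N f \<Longrightarrow> i \<le> N" for i
    by (simp_all add: IP_def IR_def)
  ultimately consider
      (P) "\<omega> 0 \<le> N" "\<omega> 0 \<in> IP N f" "\<omega> 1 \<le> N"
    | (R) "\<omega> 0 \<le> N" "\<omega> 0 \<notin> IP N f" "N < \<omega> 1"
    | (P') "N < \<omega> 0" "\<omega> 0 - N \<in> IP N f" "N < \<omega> 1"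
    | (R') "N < \<omega> 0" "\<omega> 0 - N \<notin> IP N f" "\<omega> 1 \<le> N"
    unfolding adm_def using IP_IR_disjoint by blast
  then show ?thesis
    by cases (simp_all add: z GG_def FF_def PiM_def gg_def shift_def piA_def bar_def Rf_def)
qed

lemma continuous_on_PiM: "continuous_on UNIV (PiM N)"
proof -
  have coord0: "continuous_on UNIV (\<lambda>z :: seq \<times> real. fst z 0)"
    by (rule continuous_on_coordinate_map[where g="\<lambda>n. n"])
  have piA: "continuous_on S (\<lambda>z :: seq \<times> real. piA N (fst z))" for S
    unfolding piA_def
    by (intro continuous_on_coordinatewise_then_product
        continuous_on_subset[OF continuous_on_coordinate_map] subset_UNIV)
  have "continuous_on ({z. fst z 0 \<le> N} \<union> {z. Suc N \<le> fst z 0})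
      (\<lambda>z :: seq \<times> real. if fst z 0 \<le> N then (piA N (fst z), snd z) else (piA N (fst z), Rf (snd z)))"
  proof (rule continuous_on_cases)
    show "closed {z :: seq \<times> real. fst z 0 \<le> N}"
      by (rule closed_Collect_le[OF coord0 continuous_on_const])
    show "closed {z :: seq \<times> real. Suc N \<le> fst z 0}"
      by (rule closed_Collect_le[OF continuous_on_const coord0])
  qed (auto simp: Rf_def intro!: continuous_intros piA)
  moreover have "{z :: seq \<times> real. fst z 0 \<le> N} \<union> {z. Suc N \<le> fst z 0} = UNIV"
    by auto
  ultimately show ?thesis
    unfolding PiM_def[abs_def] by simp
qed

lemma emp_FF_PiM:
  assumes "\<omega> \<in> SigmaA N f"
  shows "emp (FF f) (PiM N (\<omega>, y)) n = distr (emp (GG N f) (\<omega>, y) n) borel (PiM N)"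
proof (rule emp_semiconj[where A="{z. fst z \<in> SigmaA N f}"])
  show "PiM N \<in> borel_measurable borel"
    by (rule borel_measurable_continuous_onI[OF continuous_on_PiM])
  fix z :: "seq \<times> real"
  assume "z \<in> {z. fst z \<in> SigmaA N f}"
  then show "GG N f z \<in> {z. fst z \<in> SigmaA N f}"
    by (simp add: GG_def shift_in_SigmaA)
  show "PiM N (GG N f z) = FF f (PiM N z)"
    using \<open>z \<in> _\<close> by (simp add: PiM_GG)
qed (simp add: assms)

theorem lemma3p28:
  fixes N :: nat and f :: "nat \<Rightarrow> real \<Rightarrow> real"
    and \<omega> :: seq and x :: real
    and \<nu> \<mu> :: "(seq \<times> real) measure"
  assumes "N \<ge> 1"
    and "\<forall>i\<in>{1..N}. C1_diffeo_into (f i)"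
    and "\<omega> \<in> SigmaA N f" and "x \<in> II"
    and "meas_on (SigmaN N \<times> II) \<nu>"
    and "weak_conv (emp (FF f) (PiM N (\<omega>, x))) \<nu>"
    and "meas_on (SigmaA N f \<times> II) \<mu>"
    and "\<exists>r. strict_mono r \<and> weak_conv (\<lambda>k. emp (GG N f) (\<omega>, x) (r k)) \<mu>"
  shows "\<nu> = distr \<mu> borel (PiM N)"
proof -
  obtain r where "strict_mono r" and \<mu>_limit: "weak_conv (\<lambda>k. emp (GG N f) (\<omega>, x) (r k)) \<mu>"
    using assms(8) by blast
  have \<mu>: "finite_measure \<mu>" "sets \<mu> = sets borel" and \<nu>: "finite_measure \<nu>" "sets \<nu> = sets borel"
    using assms(5,7) by (simp_all add: meas_on_def)
  have \<nu>_limit: "weak_conv (\<lambda>k. emp (FF f) (PiM N (\<omega>, x)) (r k)) \<nu>"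
    using assms(6) \<open>strict_mono r\<close> by (rule weak_conv_subseq)
  have "weak_conv (\<lambda>k. distr (emp (GG N f) (\<omega>, x) (r k)) borel (PiM N)) (distr \<mu> borel (PiM N))"
    by (rule weak_conv_distr[OF \<mu>_limit continuous_on_PiM]) (simp_all add: emp_def \<mu>)
  then have \<Pi>\<mu>_limit: "weak_conv (\<lambda>k. emp (FF f) (PiM N (\<omega>, x)) (r k)) (distr \<mu> borel (PiM N))"
    by (simp add: emp_FF_PiM[OF assms(3)])
  have "PiM N \<in> measurable \<mu> borel"
    using borel_measurable_continuous_onI[OF continuous_on_PiM]
    by (simp add: measurable_cong_sets[OF \<mu>(2)])
  then show ?thesis
    by (intro weak_conv_unique[OF \<nu>_limit \<Pi>\<mu>_limit] \<nu> finite_measure.finite_measure_distr[OF \<mu>(1)]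
        sets_distr)
qed

end
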